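(* Let $(R,\mathfrak{m})$ satisfy condition $\bigstar$. Then $\bar{T}(R)+pR=\{t+x: t\in\bar{T}(R),\ x\in pR\}$ is a subring of $R$ with the same residue field as $R$. More generally, for any ideal $I$ of $R$ containing $\mathfrak{m}^2+pR$, the set $\bar{T}(R)+I$ is a subring of $R$ with the same residue field as $R$.
   Context: All rings are commutative and unital. Condition $\bigstar$ on a ring $(R,\mathfrak{m})$: $R$ is a local ring (unique maximal ideal $\mathfrak{m}$, not necessarily Noetherian) of characteristic $p^N$ for a prime $p$ and some $N\ge 1$, with finite residue field $R/\mathfrak{m}\cong\mathbb{F}_q$, and $\mathfrak{m}$ is a nilpotent ideal. $T(R)$ is the unique subgroup of $R^\times$ mapping isomorphically onto $\mathbb{F}_q^\times$ under reduction mod $\mathfrak{m}$, and $\bar{T}(R)=T(R)\cup\{0\}$. A subring $S$ is local with $\mathfrak{m}_S=\mathfrak{m}\cap S$ and its residue field is naturally a subfield of $R/\mathfrak{m}$. *)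

theory Defs
  imports "HOL-Computational_Algebra.Primes"
begin

text \<open>All rings are the whole carrier of a type of class comm_ring_1.\<close>

definition is_ideal :: "'a::comm_ring_1 set \<Rightarrow> bool" where
  "is_ideal I \<longleftrightarrow> 0 \<in> I \<and> (\<forall>x\<in>I. \<forall>y\<in>I. x + y \<in> I) \<and> (\<forall>r. \<forall>x\<in>I. r * x \<in> I)"

definition maximal_ideal :: "'a::comm_ring_1 set \<Rightarrow> bool" where
  "maximal_ideal M \<longleftrightarrow> is_ideal M \<and> M \<noteq> UNIV \<and>
     (\<forall>J. is_ideal J \<and> M \<subseteq> J \<longrightarrow> J = M \<or> J = UNIV)"

definition nilpotent_ideal :: "'a::comm_ring_1 set \<Rightarrow> bool" where
  "nilpotent_ideal I \<longleftrightarrow> (\<exists>n. \<forall>xs. length xs = n \<and> set xs \<subseteq> I \<longrightarrow> prod_list xs = 0)"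

definition res_class :: "'a::comm_ring_1 set \<Rightarrow> 'a \<Rightarrow> 'a set" where
  "res_class M x = {y. y - x \<in> M}"

definition residue_ring :: "'a::comm_ring_1 set \<Rightarrow> 'a set set" where
  "residue_ring M = range (res_class M)"

definition cond_star :: "'a::comm_ring_1 set \<Rightarrow> nat \<Rightarrow> nat \<Rightarrow> nat \<Rightarrow> bool" where
  "cond_star m p N q \<longleftrightarrow>
     maximal_ideal m \<and> (\<forall>M. maximal_ideal M \<longrightarrow> M = m) \<and>
     prime p \<and> N \<ge> 1 \<and> CHAR('a) = p ^ N \<and>
     finite (residue_ring m) \<and> card (residue_ring m) = q \<and>
     nilpotent_ideal m"

definition unit_subgroup :: "'a::comm_ring_1 set \<Rightarrow> bool" where
  "unit_subgroup G \<longleftrightarrow> G \<subseteq> {x. x dvd 1} \<and> 1 \<in> G \<and>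
     (\<forall>x\<in>G. \<forall>y\<in>G. x * y \<in> G) \<and> (\<forall>x\<in>G. \<exists>y\<in>G. x * y = 1)"

text \<open>T(R): the unique subgroup of R^\<times> mapped bijectively (hence isomorphically, being a
  group homomorphism) onto the unit group (R/m)^\<times> = (R/m) - {0 + m} by reduction mod m.\<close>
definition teich :: "'a::comm_ring_1 set \<Rightarrow> 'a set" where
  "teich m = (THE T. unit_subgroup T \<and>
      bij_betw (res_class m) T (residue_ring m - {res_class m 0}))"

definition teich_bar :: "'a::comm_ring_1 set \<Rightarrow> 'a set" where
  "teich_bar m = insert 0 (teich m)"

definition is_subring :: "'a::comm_ring_1 set \<Rightarrow> bool" where
  "is_subring S \<longleftrightarrow> 0 \<in> S \<and> 1 \<in> S \<and> (\<forall>x\<in>S. \<forall>y\<in>S. x + y \<in> S \<and> x - y \<in> S \<and> x * y \<in> S)"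

text \<open>A subring S of the local ring (R,m) has residue field S/(m \<inter> S), naturally embedded
  in R/m; it equals R/m iff this embedding is onto, i.e. every residue class of R meets S.\<close>
definition same_residue_field :: "'a::comm_ring_1 set \<Rightarrow> 'a set \<Rightarrow> bool" where
  "same_residue_field m S \<longleftrightarrow> (\<forall>x. \<exists>s\<in>S. x - s \<in> m)"

end

theory Submission
  imports Defs
begin

text \<open>Choose \<open>n\<close> such that products of \<open>n\<close> elements of \<open>\<mm>\<close> vanish and put \<open>e = p\<^sup>n\<close>.
  Since \<open>p \<in> \<mm>\<close>, raising to the \<open>p\<close>-th power multiplies \<open>x - y \<in> \<mm>\<close> by a factor from \<open>\<mm>\<close>, so
  \<open>x \<equiv> y\<close> forces \<open>x\<^sup>e = y\<^sup>e\<close>. The induced map on the finite residue field is injective, hence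
  bijective, so the \<open>e\<close>-th powers of units form a multiplicative system of representatives of the
  nonzero residues; this is \<open>T(R)\<close>, and \<open>T(R) \<union> {0}\<close> is the image of \<open>x \<mapsto> x\<^sup>e\<close>.
  As \<open>(a + b)\<^sup>e \<equiv> a\<^sup>e + b\<^sup>e\<close> modulo \<open>p\<close>, the set \<open>T(R) \<union> {0} + I\<close> is closed under addition
  whenever \<open>pR \<subseteq> I\<close>; closure under multiplication is clear, and \<open>-1 = (p - 1) - p\<close>.\<close>

lemma ideal_zero: "is_ideal I \<Longrightarrow> 0 \<in> I"
  unfolding is_ideal_def by blast

lemma ideal_add: "is_ideal I \<Longrightarrow> x \<in> I \<Longrightarrow> y \<in> I \<Longrightarrow> x + y \<in> I"
  unfolding is_ideal_def by blast

lemma ideal_mult_left: "is_ideal I \<Longrightarrow> x \<in> I \<Longrightarrow> r * x \<in> I"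
  unfolding is_ideal_def by blast

lemma ideal_mult_right: "is_ideal I \<Longrightarrow> x \<in> I \<Longrightarrow> x * r \<in> I"
  using ideal_mult_left[of I x r] by (simp add: mult.commute)

lemma ideal_uminus: "is_ideal I \<Longrightarrow> x \<in> I \<Longrightarrow> - x \<in> I"
  using ideal_mult_left[of I x "- 1"] by simp

lemma ideal_diff: "is_ideal I \<Longrightarrow> x \<in> I \<Longrightarrow> y \<in> I \<Longrightarrow> x - y \<in> I"
  using ideal_add[of I x "- y"] ideal_uminus[of I y] by simp

lemma ideal_dvd: "is_ideal I \<Longrightarrow> c \<in> I \<Longrightarrow> c dvd x \<Longrightarrow> x \<in> I"
  by (auto intro: ideal_mult_right)

lemma ideal_sum: "is_ideal I \<Longrightarrow> (\<And>i. i \<in> A \<Longrightarrow> f i \<in> I) \<Longrightarrow> sum f A \<in> I"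
  by (induction A rule: infinite_finite_induct) (auto simp: ideal_zero ideal_add)

lemma ideal_power_diff: "is_ideal I \<Longrightarrow> x - y \<in> I \<Longrightarrow> x ^ n - y ^ n \<in> I"
  by (simp add: power_diff_sumr2 ideal_mult_right)

lemma is_ideal_multiples: "is_ideal {c * r | r. True}"
  unfolding is_ideal_def
proof (intro conjI ballI allI)
  show "0 \<in> {c * r | r. True}"
    by (auto intro: exI[of _ 0])
next
  fix x y assume "x \<in> {c * r | r. True}" "y \<in> {c * r | r. True}"
  then show "x + y \<in> {c * r | r. True}"
    by (auto intro: exI[of _ "_ + _"] simp: distrib_left)
next
  fix s x assume "x \<in> {c * r | r. True}"
  then show "s * x \<in> {c * r | r. True}"
    by (auto simp: mult.left_commute)
qed

lemma res_class_eq_iff: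
  assumes "is_ideal M"
  shows "res_class M a = res_class M b \<longleftrightarrow> a - b \<in> M"
proof
  assume "res_class M a = res_class M b"
  moreover have "a \<in> res_class M a"
    using ideal_zero[OF assms] unfolding res_class_def by simp
  ultimately show "a - b \<in> M"
    unfolding res_class_def by auto
next
  assume "a - b \<in> M"
  then have "y - a \<in> M \<longleftrightarrow> y - b \<in> M" for y
    using ideal_add[OF assms, of "y - a" "a - b"] ideal_diff[OF assms, of "y - b" "a - b"] by auto
  then show "res_class M a = res_class M b"
    unfolding res_class_def by auto
qed

lemma prime_dvd_add_power_diff:
  fixes a b :: "'a::comm_ring_1"
  assumes p: "prime p"
  shows "of_nat p dvd (a + b) ^ p - a ^ p - b ^ p"
proof -
  have "{..p} = insert 0 (insert p {1..<p})"
    using prime_gt_0_nat[OF p] by auto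
  then have "(a + b) ^ p - a ^ p - b ^ p = (\<Sum>k\<in>{1..<p}. of_nat (p choose k) * a ^ k * b ^ (p - k))"
    using prime_gt_0_nat[OF p] by (simp add: binomial_ring)
  moreover have "(of_nat p :: 'a) dvd of_nat (p choose k)" if "k \<in> {1..<p}" for k
  proof -
    have "p dvd (p choose k)"
      using that p by (intro dvd_choose_prime) auto
    then show ?thesis
      by (metis dvd_def of_nat_mult)
  qed
  ultimately show ?thesis
    by (auto intro!: dvd_sum dvd_mult2)
qed

lemma prime_dvd_add_power_prime_power_diff:
  fixes a b :: "'a::comm_ring_1"
  assumes p: "prime p"
  shows "of_nat p dvd (a + b) ^ (p ^ k) - a ^ (p ^ k) - b ^ (p ^ k)"
proof (induction k)
  case (Suc k)
  define A B X where "A = a ^ (p ^ k)" and "B = b ^ (p ^ k)" and "X = (a + b) ^ (p ^ k)"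
  have "of_nat p dvd X ^ p - (A + B) ^ p"
    using Suc.IH unfolding A_def B_def X_def
    by (metis (no_types) diff_diff_eq dvd_mult2 power_diff_sumr2)
  moreover have "of_nat p dvd (A + B) ^ p - A ^ p - B ^ p"
    using p by (rule prime_dvd_add_power_diff)
  ultimately have "of_nat p dvd X ^ p - A ^ p - B ^ p"
    by (metis (no_types) dvd_add diff_add_cancel add_diff_eq)
  then show ?case
    unfolding A_def B_def X_def by (simp only: power_Suc2 power_mult)
qed simp

lemma bij_betw_subset_imp_eq:
  assumes "bij_betw f A C" and "bij_betw f B C" and "A \<subseteq> B"
  shows "A = B"
proof
  show "B \<subseteq> A"
  proof
    fix b assume "b \<in> B"
    then obtain a where "a \<in> A" "f a = f b"
      using assms(1,2) unfolding bij_betw_def by (metis imageE image_eqI)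
    then show "b \<in> A"
      using \<open>b \<in> B\<close> assms(2,3) unfolding bij_betw_def by (metis inj_onD subsetD)
  qed
qed (fact assms(3))

lemma is_subring_prime_power_image_plus_ideal:
  fixes I :: "'a::comm_ring_1 set"
  assumes p: "prime p" and I: "is_ideal I" and pI: "\<And>r. of_nat p * r \<in> I"
  shows "is_subring {a ^ (p ^ k) + x | a x. x \<in> I}" (is "is_subring ?S")
proof -
  let ?e = "p ^ k"
  have mem: "a ^ ?e + x \<in> ?S" if "x \<in> I" for a x
    using that by blast
  have plus_ideal: "z + y \<in> ?S" if "z \<in> ?S" "y \<in> I" for z y
    using that ideal_add[OF I] by (force simp: add.assoc)
  have add: "z + w \<in> ?S" if z: "z \<in> ?S" and w: "w \<in> ?S" for z w
  proof -
    obtain a b x y where zw: "z = a ^ ?e + x" "w = b ^ ?e + y" "x \<in> I" "y \<in> I"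
      using z w by blast
    define d where "d = (a + b) ^ ?e - a ^ ?e - b ^ ?e"
    have "d \<in> I"
      using prime_dvd_add_power_prime_power_diff[OF p, of a b k] pI
      unfolding d_def dvd_def by auto
    have "z + w = (a + b) ^ ?e + (x + y - d)"
      unfolding zw d_def by (simp add: algebra_simps)
    moreover have "x + y - d \<in> I"
      using zw \<open>d \<in> I\<close> by (simp add: ideal_add[OF I] ideal_diff[OF I])
    ultimately show ?thesis
      using mem by simp
  qed
  have mult: "z * w \<in> ?S" if z: "z \<in> ?S" and w: "w \<in> ?S" for z w
  proof -
    obtain a b x y where zw: "z = a ^ ?e + x" "w = b ^ ?e + y" "x \<in> I" "y \<in> I"
      using z w by blast
    have "z * w = (a * b) ^ ?e + (a ^ ?e * y + x * w)"
      unfolding zw by (simp add: algebra_simps)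
    moreover have "a ^ ?e * y + x * w \<in> I"
      using zw by (simp add: ideal_add[OF I] ideal_mult_left[OF I] ideal_mult_right[OF I])
    ultimately show ?thesis
      using mem by simp
  qed
  have zero: "0 \<in> ?S" and one: "1 \<in> ?S"
    using mem[where a = 0 and x = 0] mem[where a = 1 and x = 0] ideal_zero[OF I] prime_gt_0_nat[OF p]
    by (simp_all add: power_0_left)
  have of_nat: "of_nat n \<in> ?S" for n
    by (induction n) (use zero add[OF one] in \<open>simp_all only: of_nat_0 of_nat_Suc\<close>)
  have "of_nat (p - 1) + of_nat p * (- 1) = (- 1 :: 'a)"
    using prime_gt_0_nat[OF p] by simp
  then have minus_one: "- 1 \<in> ?S"
    using plus_ideal[OF of_nat pI, of "p - 1" "- 1"] by (simp only:)
  have diff: "z - w \<in> ?S" if "z \<in> ?S" "w \<in> ?S" for z w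
    using add[OF that(1) mult[OF minus_one that(2)]] by simp
  show ?thesis
    unfolding is_subring_def by (intro conjI ballI zero one add diff mult)
qed

locale nilpotent_local_ring =
  fixes m :: "'a::comm_ring_1 set"
  assumes maximal: "maximal_ideal m" and nilpotent: "nilpotent_ideal m"
begin

lemma ideal: "is_ideal m"
  using maximal unfolding maximal_ideal_def by blast

lemma one_not_mem: "1 \<notin> m"
proof
  assume "1 \<in> m"
  then have "x \<in> m" for x
    using ideal_mult_right[OF ideal, of 1 x] by simp
  then show False
    using maximal unfolding maximal_ideal_def by blast
qed

definition nil_index :: nat where
  "nil_index = (SOME n. \<forall>xs. length xs = n \<and> set xs \<subseteq> m \<longrightarrow> prod_list xs = 0)"

lemma prod_list_eq_0:
  assumes "nil_index \<le> length xs" and "set xs \<subseteq> m"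
  shows "prod_list xs = 0"
proof -
  have "\<forall>xs. length xs = nil_index \<and> set xs \<subseteq> m \<longrightarrow> prod_list xs = 0"
    unfolding nil_index_def
    by (rule someI_ex) (use nilpotent in \<open>simp add: nilpotent_ideal_def\<close>)
  moreover have "length (take nil_index xs) = nil_index" "set (take nil_index xs) \<subseteq> m"
    using assms by (auto dest: in_set_takeD)
  ultimately have "prod_list (take nil_index xs) = 0"
    by blast
  then show ?thesis
    by (metis append_take_drop_id mult_zero_left prod_list.append)
qed

lemma power_eq_0: "x \<in> m \<Longrightarrow> nil_index \<le> k \<Longrightarrow> x ^ k = 0"
  using prod_list_eq_0[of "replicate k x"] by (auto simp: set_replicate_conv_if)

lemma not_mem_imp_unit:
  assumes "x \<notin> m"
  shows "x dvd 1"
proof -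
  define J where "J = {r * x + y | r y. y \<in> m}"
  have "is_ideal J"
    unfolding is_ideal_def J_def
  proof (intro conjI ballI allI)
    show "0 \<in> {r * x + y | r y. y \<in> m}"
      using ideal_zero[OF ideal] by (auto intro: exI[of _ 0])
  next
    fix a b assume "a \<in> {r * x + y | r y. y \<in> m}" "b \<in> {r * x + y | r y. y \<in> m}"
    then obtain r y r' y' where "a = r * x + y" "b = r' * x + y'" "y \<in> m" "y' \<in> m"
      by blast
    then have "a + b = (r + r') * x + (y + y')" "y + y' \<in> m"
      by (simp_all add: algebra_simps ideal_add[OF ideal])
    then show "a + b \<in> {r * x + y | r y. y \<in> m}"
      by blast
  next
    fix s a assume "a \<in> {r * x + y | r y. y \<in> m}"
    then obtain r y where "a = r * x + y" "y \<in> m"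
      by blast
    then have "s * a = (s * r) * x + s * y" "s * y \<in> m"
      by (simp_all add: algebra_simps ideal_mult_left[OF ideal])
    then show "s * a \<in> {r * x + y | r y. y \<in> m}"
      by blast
  qed
  moreover have "m \<subseteq> J"
    unfolding J_def by (force intro: exI[of _ 0])
  moreover have "x \<in> J"
    unfolding J_def using ideal_zero[OF ideal] by (force intro: exI[of _ 1])
  ultimately have "J = UNIV"
    using maximal assms unfolding maximal_ideal_def by blast
  then obtain r y where "1 = r * x + y" "y \<in> m"
    unfolding J_def by blast
  then have "r * x = 1 - y"
    by (simp add: algebra_simps)
  then have "(r * x) * (\<Sum>i<nil_index. y ^ i) = 1"
    using one_diff_power_eq[of y nil_index] power_eq_0[OF \<open>y \<in> m\<close>] by simp
  then have "x * (r * (\<Sum>i<nil_index. y ^ i)) = 1"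
    by (simp only: mult_ac)
  then show ?thesis
    by (metis dvd_triv_left)
qed

lemma mult_mem_imp_mem:
  assumes "a * b \<in> m" and "a \<notin> m"
  shows "b \<in> m"
proof -
  obtain u where "1 = a * u"
    using not_mem_imp_unit[OF \<open>a \<notin> m\<close>] unfolding dvd_def by blast
  then have "b = u * (a * b)"
    by (metis mult.left_commute mult_1_right)
  then show ?thesis
    using ideal_mult_left[OF ideal \<open>a * b \<in> m\<close>] by metis
qed

lemma power_mem_imp_mem: "x ^ k \<in> m \<Longrightarrow> x \<in> m"
  by (induction k) (auto simp: one_not_mem dest: mult_mem_imp_mem)

end

locale teichmueller_ring = nilpotent_local_ring +
  fixes p :: nat
  assumes prime: "prime p" and of_nat_p_mem: "of_nat p \<in> m"
    and finite_residue_ring: "finite (residue_ring m)"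
begin

lemma res_class_eq_iff_mem: "res_class m a = res_class m b \<longleftrightarrow> a - b \<in> m"
  using res_class_eq_iff[OF ideal] .

text \<open>The cofactor of \<open>x - y\<close> in \<open>x\<^sup>p - y\<^sup>p\<close> is congruent to \<open>p y\<^sup>p\<^sup>-\<^sup>1\<close>, hence lies in \<open>\<mm>\<close>.\<close>

lemma power_prime_diff_factor:
  assumes "x - y \<in> m"
  shows "\<exists>e\<in>m. x ^ p - y ^ p = e * (x - y)"
proof -
  define e where "e = (\<Sum>i<p. y ^ (p - Suc i) * x ^ i)"
  have "y ^ (p - Suc i) * y ^ i = y ^ (p - 1)" if "i < p" for i
    using that by (simp flip: power_add)
  then have "e - of_nat p * y ^ (p - 1) = (\<Sum>i<p. y ^ (p - Suc i) * (x ^ i - y ^ i))"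
    unfolding e_def by (simp add: right_diff_distrib sum_subtractf)
  also have "\<dots> \<in> m"
    using assms by (intro ideal_sum ideal_mult_left ideal_power_diff ideal)
  finally have "e \<in> m"
    using ideal_add[OF ideal _ ideal_mult_right[OF ideal of_nat_p_mem, of "y ^ (p - 1)"]] by force
  moreover have "x ^ p - y ^ p = e * (x - y)"
    unfolding e_def power_diff_sumr2 by (simp add: mult.commute)
  ultimately show ?thesis
    by blast
qed

lemma power_prime_power_diff_factor:
  assumes "x - y \<in> m"
  shows "\<exists>es. length es = k \<and> set es \<subseteq> m \<and> x ^ (p ^ k) - y ^ (p ^ k) = prod_list es * (x - y)"
proof (induction k)
  case (Suc k)
  then obtain es where es: "length es = k" "set es \<subseteq> m"
    and diff: "x ^ (p ^ k) - y ^ (p ^ k) = prod_list es * (x - y)"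
    by blast
  then have "x ^ (p ^ k) - y ^ (p ^ k) \<in> m"
    using ideal_mult_left[OF ideal assms] by simp
  then obtain e where "e \<in> m" "(x ^ (p ^ k)) ^ p - (y ^ (p ^ k)) ^ p = e * (x ^ (p ^ k) - y ^ (p ^ k))"
    using power_prime_diff_factor by blast
  then have "x ^ (p ^ Suc k) - y ^ (p ^ Suc k) = prod_list (e # es) * (x - y)"
    unfolding diff by (simp add: power_Suc2 power_mult mult.assoc del: power_Suc)
  then show ?case
    using es \<open>e \<in> m\<close> by (intro exI[of _ "e # es"]) simp
qed simp

definition teich_exp :: nat where
  "teich_exp = p ^ nil_index"

lemma nil_index_le_teich_exp: "nil_index \<le> teich_exp"
proof -
  have "nil_index < 2 ^ nil_index"
    by (rule less_exp)
  also have "\<dots> \<le> p ^ nil_index"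
    using prime_ge_2_nat[OF prime] by (rule power_mono) simp
  finally show ?thesis
    unfolding teich_exp_def by simp
qed

lemma power_teich_exp_eq_0: "x \<in> m \<Longrightarrow> x ^ teich_exp = 0"
  using power_eq_0 nil_index_le_teich_exp by blast

lemma power_teich_exp_eq_if_cong:
  assumes "x - y \<in> m"
  shows "x ^ teich_exp = y ^ teich_exp"
proof -
  obtain es where "length es = nil_index" "set es \<subseteq> m"
    and diff: "x ^ teich_exp - y ^ teich_exp = prod_list es * (x - y)"
    using power_prime_power_diff_factor[OF assms] unfolding teich_exp_def by blast
  then have "prod_list (es @ [x - y]) = 0"
    using assms by (intro prod_list_eq_0) auto
  then show ?thesis
    using diff by simp
qed

lemma cong_if_power_teich_exp_cong:
  assumes "x ^ teich_exp - y ^ teich_exp \<in> m"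
  shows "x - y \<in> m"
proof -
  have "of_nat p dvd ((x - y) + y) ^ teich_exp - (x - y) ^ teich_exp - y ^ teich_exp"
    unfolding teich_exp_def by (rule prime_dvd_add_power_prime_power_diff[OF prime])
  then have "x ^ teich_exp - (x - y) ^ teich_exp - y ^ teich_exp \<in> m"
    using ideal_dvd[OF ideal of_nat_p_mem] by simp
  then have "(x ^ teich_exp - y ^ teich_exp) - (x ^ teich_exp - (x - y) ^ teich_exp - y ^ teich_exp) \<in> m"
    by (rule ideal_diff[OF ideal assms])
  then have "(x - y) ^ teich_exp \<in> m"
    by simp
  then show ?thesis
    by (rule power_mem_imp_mem)
qed

lemma exists_power_teich_exp_cong: "\<exists>y. x - y ^ teich_exp \<in> m"
proof -
  define F where "F = residue_ring m"
  define h where "h C = res_class m ((SOME z. z \<in> C) ^ teich_exp)" for C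
  have h: "h (res_class m a) = res_class m (a ^ teich_exp)" for a
  proof -
    have "a \<in> res_class m a"
      using ideal_zero[OF ideal] unfolding res_class_def by simp
    then have "(SOME z. z \<in> res_class m a) \<in> res_class m a"
      by (rule someI)
    then show ?thesis
      unfolding h_def res_class_def by (simp add: power_teich_exp_eq_if_cong)
  qed
  have "inj_on h F"
  proof (rule inj_onI)
    fix C D assume "C \<in> F" "D \<in> F" "h C = h D"
    then obtain a b where "C = res_class m a" "D = res_class m b"
      unfolding F_def residue_ring_def by blast
    then show "C = D"
      using \<open>h C = h D\<close> by (simp add: h res_class_eq_iff_mem cong_if_power_teich_exp_cong)
  qed
  moreover have "h ` F \<subseteq> F"
    unfolding F_def residue_ring_def using h by auto
  ultimately have "h ` F = F"
    using finite_residue_ring endo_inj_surj unfolding F_def by blast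
  then obtain y where "res_class m x = h (res_class m y)"
    unfolding F_def residue_ring_def by (metis (no_types, lifting) imageE rangeE rangeI)
  then show ?thesis
    by (auto simp: h res_class_eq_iff_mem)
qed

lemma unit_subgroup_powers: "unit_subgroup ((\<lambda>x. x ^ teich_exp) ` (- m))"
  unfolding unit_subgroup_def
proof (intro conjI ballI subsetI)
  show "1 \<in> (\<lambda>x. x ^ teich_exp) ` (- m)"
    using one_not_mem by (auto intro: image_eqI[of _ _ 1])
next
  fix v w assume "v \<in> (\<lambda>x. x ^ teich_exp) ` (- m)" "w \<in> (\<lambda>x. x ^ teich_exp) ` (- m)"
  then obtain a b where "v = a ^ teich_exp" "w = b ^ teich_exp" "a \<notin> m" "b \<notin> m"
    by blast
  then show "v * w \<in> (\<lambda>x. x ^ teich_exp) ` (- m)"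
    using mult_mem_imp_mem by (auto simp: power_mult_distrib intro!: image_eqI[of _ _ "a * b"])
next
  fix v assume "v \<in> (\<lambda>x. x ^ teich_exp) ` (- m)"
  then obtain a where v: "v = a ^ teich_exp" "a \<notin> m"
    by blast
  then obtain b where "a * b = 1"
    using not_mem_imp_unit unfolding dvd_def by metis
  moreover from this have "b \<notin> m"
    using ideal_mult_left[OF ideal, of b a] one_not_mem by auto
  ultimately have "b ^ teich_exp \<in> (\<lambda>x. x ^ teich_exp) ` (- m)" "v * b ^ teich_exp = 1"
    using v by (auto simp flip: power_mult_distrib)
  then show "\<exists>w\<in>(\<lambda>x. x ^ teich_exp) ` (- m). v * w = 1" "v \<in> {x. x dvd 1}"
    by (auto intro: dvdI[of _ _ "b ^ teich_exp"])
qed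

lemma bij_betw_res_class_powers:
  "bij_betw (res_class m) ((\<lambda>x. x ^ teich_exp) ` (- m)) (residue_ring m - {res_class m 0})"
  unfolding bij_betw_def
proof
  show "inj_on (res_class m) ((\<lambda>x. x ^ teich_exp) ` (- m))"
  proof (rule inj_onI)
    fix v w assume "v \<in> (\<lambda>x. x ^ teich_exp) ` (- m)" "w \<in> (\<lambda>x. x ^ teich_exp) ` (- m)"
      and "res_class m v = res_class m w"
    then obtain a b where "v = a ^ teich_exp" "w = b ^ teich_exp" "v - w \<in> m"
      by (auto simp: res_class_eq_iff_mem)
    then show "v = w"
      using cong_if_power_teich_exp_cong power_teich_exp_eq_if_cong by metis
  qed
  have "res_class m (a ^ teich_exp) \<noteq> res_class m 0" if "a \<notin> m" for a
    using that power_mem_imp_mem[of a teich_exp] res_class_eq_iff_mem[of "a ^ teich_exp" 0] by auto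
  then have "res_class m ` (\<lambda>x. x ^ teich_exp) ` (- m) \<subseteq> residue_ring m - {res_class m 0}"
    unfolding residue_ring_def by blast
  moreover have "residue_ring m - {res_class m 0} \<subseteq> res_class m ` (\<lambda>x. x ^ teich_exp) ` (- m)"
  proof
    fix C assume "C \<in> residue_ring m - {res_class m 0}"
    then obtain x where x: "C = res_class m x" "x \<notin> m"
      unfolding residue_ring_def using res_class_eq_iff_mem[of _ 0] by auto
    obtain y where y: "x - y ^ teich_exp \<in> m"
      using exists_power_teich_exp_cong by blast
    then have "y \<notin> m"
      using \<open>x \<notin> m\<close> power_teich_exp_eq_0 by fastforce
    moreover have "C = res_class m (y ^ teich_exp)"
      using x y by (simp add: res_class_eq_iff_mem)
    ultimately show "C \<in> res_class m ` (\<lambda>x. x ^ teich_exp) ` (- m)"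
      by blast
  qed
  ultimately show "res_class m ` (\<lambda>x. x ^ teich_exp) ` (- m) = residue_ring m - {res_class m 0}"
    by (rule subset_antisym)
qed

text \<open>Any other system of representatives \<open>T\<close> is permuted by \<open>t \<mapsto> t\<^sup>e\<close>, so consists of \<open>e\<close>-th powers.\<close>

lemma unit_subgroup_bij_imp_eq_powers:
  assumes T: "unit_subgroup T" and bij: "bij_betw (res_class m) T (residue_ring m - {res_class m 0})"
  shows "T = (\<lambda>x. x ^ teich_exp) ` (- m)"
proof (rule bij_betw_subset_imp_eq[OF bij bij_betw_res_class_powers])
  have not_mem: "t \<notin> m" if "t \<in> T" for t
    using bij_betw_apply[OF bij that] res_class_eq_iff_mem[of t 0] by simp
  have "finite T"
    using bij finite_residue_ring by (metis bij_betw_finite finite_Diff)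
  moreover have "t ^ k \<in> T" if "t \<in> T" for t k
    using that T unfolding unit_subgroup_def by (induction k) auto
  then have "(\<lambda>t. t ^ teich_exp) ` T \<subseteq> T"
    by blast
  moreover have "inj_on (\<lambda>t. t ^ teich_exp) T"
  proof (rule inj_onI)
    fix s t assume "s \<in> T" "t \<in> T" "s ^ teich_exp = t ^ teich_exp"
    then have "res_class m s = res_class m t"
      using ideal_zero[OF ideal] cong_if_power_teich_exp_cong by (simp add: res_class_eq_iff_mem)
    then show "s = t"
      using inj_onD[OF bij_betw_imp_inj_on[OF bij]] \<open>s \<in> T\<close> \<open>t \<in> T\<close> by blast
  qed
  ultimately have "(\<lambda>t. t ^ teich_exp) ` T = T"
    by (rule endo_inj_surj)
  then show "T \<subseteq> (\<lambda>x. x ^ teich_exp) ` (- m)"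
    using not_mem by blast
qed

lemma teich_eq_powers: "teich m = (\<lambda>x. x ^ teich_exp) ` (- m)"
  unfolding teich_def
  using unit_subgroup_powers bij_betw_res_class_powers unit_subgroup_bij_imp_eq_powers
  by (intro the_equality conjI) blast+

lemma teich_bar_eq_range_power: "teich_bar m = range (\<lambda>x. x ^ teich_exp)"
proof -
  have "range (\<lambda>x. x ^ teich_exp) = (\<lambda>x. x ^ teich_exp) ` m \<union> (\<lambda>x. x ^ teich_exp) ` (- m)"
    by blast
  also have "(\<lambda>x. x ^ teich_exp) ` m = {0}"
    using image_eqI[of 0 "\<lambda>x. x ^ teich_exp" 0 m] ideal_zero[OF ideal] power_teich_exp_eq_0
    by auto
  finally show ?thesis
    unfolding teich_bar_def teich_eq_powers by simp
qed

lemma same_residue_field_power_image_plus_ideal: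
  assumes "is_ideal I"
  shows "same_residue_field m {a ^ teich_exp + x | a x. x \<in> I}"
  unfolding same_residue_field_def
proof
  fix x
  obtain y where "x - y ^ teich_exp \<in> m"
    using exists_power_teich_exp_cong by blast
  moreover have "y ^ teich_exp + 0 \<in> {a ^ teich_exp + x | a x. x \<in> I}"
    using ideal_zero[OF assms] by blast
  ultimately show "\<exists>s\<in>{a ^ teich_exp + x | a x. x \<in> I}. x - s \<in> m"
    by force
qed

end

theorem corollary26:
  fixes m :: "'a::comm_ring_1 set" and p N q :: nat
  assumes "cond_star m p N q"
  shows "(is_subring {t + x | t x. t \<in> teich_bar m \<and> x \<in> {of_nat p * r | r. True}}
       \<and> same_residue_field m {t + x | t x. t \<in> teich_bar m \<and> x \<in> {of_nat p * r | r. True}})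
    \<and> (\<forall>I. is_ideal I \<and> (\<forall>x\<in>m. \<forall>y\<in>m. x * y \<in> I) \<and> (\<forall>r. of_nat p * r \<in> I) \<longrightarrow>
       is_subring {t + x | t x. t \<in> teich_bar m \<and> x \<in> I} \<and>
       same_residue_field m {t + x | t x. t \<in> teich_bar m \<and> x \<in> I})"
proof -
  have star: "maximal_ideal m" "nilpotent_ideal m" "prime p" "CHAR('a) = p ^ N"
    "finite (residue_ring m)"
    using assms unfolding cond_star_def by auto
  interpret nilpotent_local_ring m
    using star by unfold_locales
  have "(of_nat p :: 'a) ^ N \<in> m"
    using of_nat_CHAR[where 'a = 'a] star(4) ideal_zero[OF ideal] by (simp flip: of_nat_power)
  then interpret teichmueller_ring m p
    using star by unfold_locales (auto dest: power_mem_imp_mem)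
  have subring: "is_subring {t + x | t x. t \<in> teich_bar m \<and> x \<in> I} \<and>
      same_residue_field m {t + x | t x. t \<in> teich_bar m \<and> x \<in> I}"
    if "is_ideal I" "\<forall>r. of_nat p * r \<in> I" for I
  proof -
    have "{t + x | t x. t \<in> teich_bar m \<and> x \<in> I} = {a ^ (p ^ nil_index) + x | a x. x \<in> I}"
      unfolding teich_bar_eq_range_power teich_exp_def by blast
    then show ?thesis
      using is_subring_prime_power_image_plus_ideal[OF prime that(1)] that(2)
        same_residue_field_power_image_plus_ideal[OF that(1)]
      unfolding teich_exp_def by simp
  qed
  show ?thesis
    using subring[OF is_ideal_multiples] subring by blast
qed

end
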